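(* Let $(V,\mathcal H,\iota,W)$ be a generalized functional theory. The ensemble functional $\mathcal F_e$ is the lower convex envelope of both the Hohenberg–Kohn functional $\mathcal F_{HK}$ and the pure functional $\mathcal F_p$; that is, with all three functionals extended to $V^*$ by $+\infty$ outside their domains, $\mathcal F_{HK}^{**}=\mathcal F_p^{**}=\mathcal F_e$.
   Context: A generalized functional theory is a tuple $(V,\mathcal H,\iota,W)$ with $V$ a finite-dimensional real vector space, $\mathcal H$ a finite-dimensional complex Hilbert space, $\iota:V\to i\mathfrak u(\mathcal H)$ linear into the Hermitian operators, $W$ Hermitian. Density operators are regarded as elements of $(i\mathfrak u(\mathcal H))^*$ via the trace pairing; $\iota^*$ is the dual map. $\mathcal P$ = pure states, $\mathcal E$ = density operators, $\mathbf G_p(v)$ = pure ground states of $\iota(v)+W$. $\mathcal F_{HK}$ is defined on $\bigcup_v\iota^*(\mathbf G_p(v))$ by $\mathcal F_{HK}(\rho)=\mathrm{Tr}(\Gamma W)$ for any $v$ and $\Gamma\in\mathbf G_p(v)$ with $\iota^*(\Gamma)=\rho$ (independent of choices); $\mathcal F_p(\rho)=\min\{\mathrm{Tr}(\Gamma W):\Gamma\in\mathcal P,\iota^*(\Gamma)=\rho\}$ on $\iota^*(\mathcal P)$; $\mathcal F_e(\rho)=\min\{\mathrm{Tr}(\Gamma W):\Gamma\in\mathcal E,\iota^*(\Gamma)=\rho\}$ on $\iota^*(\mathcal E)$. For $g:V^*\to\mathbb R\cup\{+\infty\}$, $g^*(v)=\sup_\rho(\langle\rho,v\rangle-g(\rho))$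 is the convex conjugate and $g^{**}$ the biconjugate, i.e. the lower (closed) convex envelope of $g$. *)

theory Defs
  imports "HOL-Analysis.Analysis"
begin

text \<open>Finite-dimensional complex Hilbert space modelled as complex^'n (standard inner product);
operators on it as matrices complex^'n^'n. V is a real type of class euclidean_space;
V^* is the set of real-linear functionals on V.\<close>

definition hermitian :: "complex^'n^'n \<Rightarrow> bool" where
  "hermitian A \<longleftrightarrow> (\<forall>i j. A$i$j = cnj (A$j$i))"

definition cinner :: "complex^'n \<Rightarrow> complex^'n \<Rightarrow> complex" where
  "cinner x y = (\<Sum>i\<in>UNIV. cnj (x$i) * y$i)"

definition proj :: "complex^'n \<Rightarrow> complex^'n^'n" where
  "proj \<psi> = (\<chi> i j. \<psi>$i * cnj (\<psi>$j))"

definition pure_states :: "(complex^'n^'n) set" where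
  "pure_states = {proj \<psi> | \<psi>. cinner \<psi> \<psi> = 1}"

definition density_ops :: "(complex^'n^'n) set" where
  "density_ops = {\<Gamma>. hermitian \<Gamma> \<and> (\<forall>x. 0 \<le> Re (cinner x (\<Gamma> *v x))) \<and> trace \<Gamma> = 1}"

definition ground_states :: "complex^'n^'n \<Rightarrow> (complex^'n^'n) set" where
  "ground_states H = {proj \<psi> | \<psi>. cinner \<psi> \<psi> = 1 \<and>
      (\<exists>e::real. H *v \<psi> = complex_of_real e *s \<psi> \<and>
         (\<forall>(\<mu>::real) \<phi>. \<phi> \<noteq> 0 \<and> H *v \<phi> = complex_of_real \<mu> *s \<phi> \<longrightarrow> e \<le> \<mu>))}"

definition gen_functional_theory :: "('v::euclidean_space \<Rightarrow> complex^'n^'n) \<Rightarrow> complex^'n^'n \<Rightarrow> bool" where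
  "gen_functional_theory \<iota> W \<longleftrightarrow> linear \<iota> \<and> (\<forall>v. hermitian (\<iota> v)) \<and> hermitian W"

definition iota_star :: "('v \<Rightarrow> complex^'n^'n) \<Rightarrow> complex^'n^'n \<Rightarrow> ('v \<Rightarrow> real)" where
  "iota_star \<iota> \<Gamma> = (\<lambda>v. Re (trace (\<Gamma> ** \<iota> v)))"

definition energy :: "complex^'n^'n \<Rightarrow> complex^'n^'n \<Rightarrow> real" where
  "energy W \<Gamma> = Re (trace (\<Gamma> ** W))"

definition Gp :: "('v \<Rightarrow> complex^'n^'n) \<Rightarrow> complex^'n^'n \<Rightarrow> 'v \<Rightarrow> (complex^'n^'n) set" where
  "Gp \<iota> W v = ground_states (\<iota> v + W)"

text \<open>Functionals extended by +infinity outside their domains.\<close>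
definition F_HK :: "('v \<Rightarrow> complex^'n^'n) \<Rightarrow> complex^'n^'n \<Rightarrow> ('v \<Rightarrow> real) \<Rightarrow> ereal" where
  "F_HK \<iota> W \<rho> =
     (if \<exists>v \<Gamma>. \<Gamma> \<in> Gp \<iota> W v \<and> iota_star \<iota> \<Gamma> = \<rho>
      then ereal (energy W (snd (SOME (v, \<Gamma>). \<Gamma> \<in> Gp \<iota> W v \<and> iota_star \<iota> \<Gamma> = \<rho>)))
      else \<infinity>)"

definition F_p :: "('v \<Rightarrow> complex^'n^'n) \<Rightarrow> complex^'n^'n \<Rightarrow> ('v \<Rightarrow> real) \<Rightarrow> ereal" where
  "F_p \<iota> W \<rho> = Inf ((\<lambda>\<Gamma>. ereal (energy W \<Gamma>)) ` {\<Gamma> \<in> pure_states. iota_star \<iota> \<Gamma> = \<rho>})"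

definition F_e :: "('v \<Rightarrow> complex^'n^'n) \<Rightarrow> complex^'n^'n \<Rightarrow> ('v \<Rightarrow> real) \<Rightarrow> ereal" where
  "F_e \<iota> W \<rho> = Inf ((\<lambda>\<Gamma>. ereal (energy W \<Gamma>)) ` {\<Gamma> \<in> density_ops. iota_star \<iota> \<Gamma> = \<rho>})"

definition conj_fn :: "(('v::real_vector \<Rightarrow> real) \<Rightarrow> ereal) \<Rightarrow> 'v \<Rightarrow> ereal" where
  "conj_fn g v = (SUP \<rho>\<in>{\<rho>. linear \<rho>}. ereal (\<rho> v) - g \<rho>)"

definition biconj :: "(('v::real_vector \<Rightarrow> real) \<Rightarrow> ereal) \<Rightarrow> ('v \<Rightarrow> real) \<Rightarrow> ereal" where
  "biconj g \<rho> = (SUP v. ereal (\<rho> v) - conj_fn g v)"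

end

theory Submission
  imports Defs
begin

text \<open>
  \<open>F_e\<close> is the infimum of the linear energy \<open>\<Gamma> \<mapsto> Tr(\<Gamma>W)\<close> over the fibres of the linear map
  \<open>\<iota>\<^sup>*\<close> restricted to the compact convex set of density operators. Such a marginal function has
  a closed convex epigraph, so the separating hyperplane theorem gives \<open>F_e\<^sup>*\<^sup>* = F_e\<close>.
  Pure ground states are pure states and pure states are density operators, so
  \<open>F_e \<le> F_p \<le> F_HK\<close> and hence \<open>F_e\<^sup>*\<^sup>* \<le> F_p\<^sup>*\<^sup>* \<le> F_HK\<^sup>*\<^sup>*\<close>. Conversely, by the variational
  principle \<open>Tr(\<Gamma>H) \<ge> E\<^sub>0(H)\<close> for density operators \<open>\<Gamma>\<close>, the conjugate \<open>F_e\<^sup>*(v)\<close> is minus the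
  ground-state energy of \<open>\<iota>(-v) + W\<close>, a value already attained by \<open>F_HK\<close> at the density of a
  ground state; thus \<open>F_e\<^sup>* \<le> F_HK\<^sup>*\<close> and \<open>F_HK\<^sup>*\<^sup>* \<le> F_e\<^sup>*\<^sup>*\<close>.
\<close>

section \<open>Symmetric operators on real inner product spaces\<close>

lemma symmetric_form_expand:
  fixes f :: "'a::real_inner \<Rightarrow> 'a"
  assumes f: "linear f" and sym: "\<And>x y. x \<bullet> f y = f x \<bullet> y"
  shows "(x + t *\<^sub>R y) \<bullet> f (x + t *\<^sub>R y) = x \<bullet> f x + 2 * t * (y \<bullet> f x) + t\<^sup>2 * (y \<bullet> f y)"
proof -
  have "x \<bullet> f y = y \<bullet> f x" using sym[of x y] by (simp add: inner_commute)
  then show ?thesis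
    by (simp add: linear_add[OF f] linear_scale[OF f] inner_add_left inner_add_right
        power2_eq_square algebra_simps)
qed

lemma psd_symmetric_form_zero_imp_zero:
  fixes f :: "'a::real_inner \<Rightarrow> 'a"
  assumes f: "linear f" and sym: "\<And>x y. x \<bullet> f y = f x \<bullet> y"
    and psd: "\<And>x. 0 \<le> x \<bullet> f x" and zero: "x \<bullet> f x = 0"
  shows "f x = 0"
proof -
  define a where "a = f x \<bullet> f x"
  define b where "b = f x \<bullet> f (f x)"
  have "2 * a \<le> e" if "e > 0" for e
  proof -
    define s where "s = e / (\<bar>b\<bar> + 1)"
    have s: "s > 0" "s * \<bar>b\<bar> \<le> e"
      using that by (auto simp: s_def field_simps)
    have "0 \<le> (x + (- s) *\<^sub>R f x) \<bullet> f (x + (- s) *\<^sub>R f x)" by (rule psd)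
    also have "\<dots> = s * (s * b - 2 * a)"
      unfolding symmetric_form_expand[OF f sym] zero a_def b_def
      by (simp add: power2_eq_square algebra_simps)
    finally have "2 * a \<le> s * b" using s by (simp add: zero_le_mult_iff)
    also have "\<dots> \<le> e" using s mult_left_mono[OF abs_ge_self, of s b] by linarith
    finally show ?thesis .
  qed
  then have "2 * a \<le> 0" using field_le_epsilon[of "2 * a" 0] by simp
  then show ?thesis using inner_ge_zero[of "f x"] by (simp add: a_def)
qed

lemma psd_symmetric_form_abs_le:
  fixes f :: "'a::real_inner \<Rightarrow> 'a"
  assumes f: "linear f" and sym: "\<And>x y. x \<bullet> f y = f x \<bullet> y" and psd: "\<And>x. 0 \<le> x \<bullet> f x"
  shows "2 * \<bar>y \<bullet> f x\<bar> \<le> x \<bullet> f x + y \<bullet> f y"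
  using psd[of "x + 1 *\<^sub>R y"] psd[of "x + (- 1) *\<^sub>R y"]
  unfolding symmetric_form_expand[OF f sym] by (simp add: abs_le_iff)

text \<open>The minimiser \<open>\<psi>\<close> of the quadratic form on the unit sphere is an eigenvector: the
  form of \<open>f - e\<close> is nonnegative and vanishes at \<open>\<psi>\<close>.\<close>

lemma symmetric_lowest_eigenvector:
  fixes f :: "'a::euclidean_space \<Rightarrow> 'a"
  assumes f: "linear f" and sym: "\<And>x y. x \<bullet> f y = f x \<bullet> y"
  obtains \<psi> e where "norm \<psi> = 1" "f \<psi> = e *\<^sub>R \<psi>" "\<And>x. e * (x \<bullet> x) \<le> x \<bullet> f x"
proof -
  have cont: "continuous_on (sphere 0 1) (\<lambda>x. x \<bullet> f x)"
    using f by (intro continuous_intros linear_continuous_on) (simp add: linear_conv_bounded_linear)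
  have "sphere (0::'a) 1 \<noteq> {}" by simp
  then obtain \<psi> where \<psi>: "norm \<psi> = 1" and min: "\<And>y. norm y = 1 \<Longrightarrow> \<psi> \<bullet> f \<psi> \<le> y \<bullet> f y"
    using continuous_attains_inf[OF compact_sphere _ cont] by auto
  define e where "e = \<psi> \<bullet> f \<psi>"
  have lower: "e * (x \<bullet> x) \<le> x \<bullet> f x" for x
  proof (cases "x = 0")
    case False
    define u where "u = (1 / norm x) *\<^sub>R x"
    have "e \<le> u \<bullet> f u" unfolding e_def using False by (intro min) (simp add: u_def)
    also have "u \<bullet> f u = (x \<bullet> f x) / (x \<bullet> x)"
      by (simp add: u_def linear_scale[OF f] flip: power2_norm_eq_inner power2_eq_square)
    finally show ?thesis using False by (simp add: field_simps)
  qed simp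
  define g where "g x = f x - e *\<^sub>R x" for x
  have g: "linear g" using f by (simp add: g_def linear_iff algebra_simps)
  have "g \<psi> = 0"
  proof (rule psd_symmetric_form_zero_imp_zero[OF g])
    show "x \<bullet> g y = g x \<bullet> y" for x y by (simp add: g_def inner_diff_left inner_diff_right sym)
    show "0 \<le> x \<bullet> g x" for x using lower[of x] by (simp add: g_def inner_diff_right)
    show "\<psi> \<bullet> g \<psi> = 0" using \<psi> by (simp add: g_def e_def inner_diff_right flip: power2_norm_eq_inner)
  qed
  then have "f \<psi> = e *\<^sub>R \<psi>" by (simp add: g_def)
  then show thesis using that[OF \<psi> _ lower] by blast
qed

section \<open>Hermitian matrices\<close>

text \<open>The real part of \<open>cinner\<close> is the real inner product of \<open>complex^'n\<close> as a Euclidean space,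
  so a Hermitian matrix acts as a symmetric real-linear operator and the results above apply.\<close>

lemma Re_cinner [simp]: "Re (cinner x y) = x \<bullet> y"
  by (simp add: cinner_def inner_vec_def inner_complex_def)

lemma cinner_self: "cinner x x = complex_of_real ((norm x)\<^sup>2)"
  by (rule complex_eqI) (simp add: power2_norm_eq_inner, simp add: cinner_def Im_sum algebra_simps)

lemma cinner_self_eq_1_iff: "cinner x x = 1 \<longleftrightarrow> norm x = 1"
  unfolding cinner_self of_real_eq_1_iff using norm_ge_zero[of x]
  by (auto simp: power2_eq_1_iff simp del: norm_ge_zero)

lemma cinner_zero_right [simp]: "cinner x 0 = 0"
  by (simp add: cinner_def)

lemma cinner_diff_right: "cinner x (y - z) = cinner x y - cinner x z"
  by (simp add: cinner_def sum_subtractf algebra_simps)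

lemma cinner_scalar_right: "cinner x (c *s y) = c * cinner x y"
  by (simp add: cinner_def sum_distrib_left algebra_simps)

lemma cinner_commute: "cinner y x = cnj (cinner x y)"
  by (simp add: cinner_def mult.commute)

lemma cinner_scalar_left: "cinner (c *s x) y = cnj c * cinner x y"
  by (simp add: cinner_def sum_distrib_left algebra_simps)

lemma scalar_mult_of_real: "complex_of_real c *s x = c *\<^sub>R x"
  by (simp add: vec_eq_iff) (simp add: scaleR_conv_of_real)

lemma matrix_vector_mult_axis: "((M::'a::semiring_1^'n^'m) *v axis j c) $ i = M$i$j * c"
  by (simp add: matrix_vector_mult_def axis_def if_distrib cong: if_cong)

lemma hermitian_cnj: "hermitian M \<Longrightarrow> cnj (M$i$j) = M$j$i"
  by (metis hermitian_def)

lemma hermitianI: "(\<And>i j. cnj (M$j$i) = M$i$j) \<Longrightarrow> hermitian M"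
  by (simp add: hermitian_def)

lemma hermitian_add: "hermitian A \<Longrightarrow> hermitian B \<Longrightarrow> hermitian (A + B)"
  by (rule hermitianI) (simp add: hermitian_cnj)

lemma hermitian_diff: "hermitian A \<Longrightarrow> hermitian B \<Longrightarrow> hermitian (A - B)"
  by (rule hermitianI) (simp add: hermitian_cnj)

lemma hermitian_scaleR: "hermitian A \<Longrightarrow> hermitian (c *\<^sub>R A)"
  by (rule hermitianI) (simp add: hermitian_cnj)

lemma hermitian_proj: "hermitian (proj \<psi>)"
  by (rule hermitianI) (simp add: proj_def)

lemma hermitian_cinner_adjoint:
  assumes "hermitian M"
  shows "cinner x (M *v y) = cinner (M *v x) y"
proof -
  have "cinner x (M *v y) = (\<Sum>i\<in>UNIV. \<Sum>j\<in>UNIV. cnj (x$i) * M$i$j * y$j)"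
    by (simp add: cinner_def matrix_vector_mult_def sum_distrib_left mult.assoc)
  also have "\<dots> = (\<Sum>j\<in>UNIV. \<Sum>i\<in>UNIV. cnj (x$i) * M$i$j * y$j)"
    by (rule sum.swap)
  also have "\<dots> = cinner (M *v x) y"
    by (simp add: cinner_def matrix_vector_mult_def cnj_sum sum_distrib_left
        hermitian_cnj[OF assms] mult_ac)
  finally show ?thesis .
qed

lemma hermitian_inner_adjoint:
  assumes "hermitian M"
  shows "x \<bullet> (M *v y) = (M *v x) \<bullet> y"
  using arg_cong[OF hermitian_cinner_adjoint[OF assms, of x y], of Re] by simp

lemma hermitian_lowest_eigenvector:
  assumes "hermitian H"
  obtains \<psi> e where "norm \<psi> = 1" "H *v \<psi> = e *\<^sub>R \<psi>" "\<And>x. e * (x \<bullet> x) \<le> x \<bullet> (H *v x)"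
  using symmetric_lowest_eigenvector[OF matrix_vector_mul_linear hermitian_inner_adjoint[OF assms]]
  by blast

lemma proj_mult_vec: "proj \<psi> *v x = cinner \<psi> x *s \<psi>"
  by (simp add: vec_eq_iff proj_def matrix_vector_mult_def cinner_def sum_distrib_left algebra_simps)

lemma trace_proj_mult: "trace (proj \<psi> ** A) = cinner \<psi> (A *v \<psi>)"
  unfolding trace_def proj_def matrix_matrix_mult_def cinner_def matrix_vector_mult_def
  by (simp add: sum_distrib_left algebra_simps) (rule sum.swap)

lemma scaleR_matrix_vector_mult: "(c *\<^sub>R M) *v x = c *\<^sub>R (M *v (x::complex^'n))"
  by (simp add: vec_eq_iff matrix_vector_mult_def scaleR_sum_right)

lemma trace_scaleR: "trace (c *\<^sub>R A) = c *\<^sub>R trace (A::complex^'n^'n)"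
  by (simp add: trace_def scaleR_sum_right)

lemma linear_trace_mult_right: "linear (\<lambda>A. trace ((M::complex^'n^'n) ** A))"
proof (rule linearI)
  show "trace (M ** (A + B)) = trace (M ** A) + trace (M ** B)" for A B
    by (simp add: matrix_add_ldistrib trace_add)
  show "trace (M ** (c *\<^sub>R A)) = c *\<^sub>R trace (M ** A)" for c A
    by (simp only: matrix_scalar_ac flip: scalar_matrix_assoc) (rule trace_scaleR)
qed

lemma linear_trace_mult_left: "linear (\<lambda>A. trace (A ** (M::complex^'n^'n)))"
  using linear_trace_mult_right[of M] by (subst trace_mul_sym)

section \<open>Positivity of the trace pairing and the variational principle\<close>

lemma deflation_psd:
  fixes G :: "complex^'n^'n"
  assumes hG: "hermitian G" and pG: "\<And>x. 0 \<le> x \<bullet> (G *v x)"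
    and \<psi>: "norm \<psi> = 1" and eig: "G *v \<psi> = l *\<^sub>R \<psi>"
  shows "0 \<le> x \<bullet> ((G - l *\<^sub>R proj \<psi>) *v x)"
proof -
  define \<alpha> where "\<alpha> = cinner \<psi> x"
  define y where "y = x - \<alpha> *s \<psi>"
  have "cinner \<psi> \<psi> = 1" using \<psi> by (simp add: cinner_self_eq_1_iff)
  then have y_orth: "cinner \<psi> y = 0"
    by (simp add: y_def \<alpha>_def cinner_diff_right cinner_scalar_right)
  have eig_\<alpha>: "G *v (\<alpha> *s \<psi>) = l *\<^sub>R (\<alpha> *s \<psi>)"
    by (simp add: vector_scalar_commute eig flip: scalar_mult_of_real)
  have "proj \<psi> *v x = \<alpha> *s \<psi>" by (simp add: proj_mult_vec \<alpha>_def)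
  then have "(G - l *\<^sub>R proj \<psi>) *v x = G *v y"
    by (simp add: y_def matrix_vector_mult_diff_distrib matrix_vector_mult_diff_rdistrib
        eig_\<alpha> scaleR_matrix_vector_mult)
  moreover have "(\<alpha> *s \<psi>) \<bullet> (G *v y) = 0"
    using y_orth arg_cong[OF cinner_scalar_left[of \<alpha> \<psi> y], of Re]
    by (simp add: hermitian_inner_adjoint[OF hG, of "\<alpha> *s \<psi>"] eig_\<alpha>)
  ultimately show ?thesis
    using pG[of y] by (simp add: y_def inner_diff_left)
qed

lemma deflation_kernel_dim_less:
  fixes G :: "complex^'n^'n"
  assumes hG: "hermitian G" and \<psi>: "norm \<psi> = 1" and eig: "G *v \<psi> = l *\<^sub>R \<psi>" and "l \<noteq> 0"
  shows "dim {x. G *v x = 0} < dim {x. (G - l *\<^sub>R proj \<psi>) *v x = 0}"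
proof -
  have c: "cinner \<psi> \<psi> = 1" using \<psi> by (simp add: cinner_self_eq_1_iff)
  have orth: "cinner \<psi> x = 0" if "G *v x = 0" for x
  proof -
    have "complex_of_real l * cinner \<psi> x = cinner \<psi> (G *v x)"
      by (simp add: hermitian_cinner_adjoint[OF hG] eig cinner_scalar_left
          flip: scalar_mult_of_real)
    with that \<open>l \<noteq> 0\<close> show ?thesis by simp
  qed
  have "{x. G *v x = 0} \<subset> {x. (G - l *\<^sub>R proj \<psi>) *v x = 0}"
  proof -
    have "\<psi> \<notin> {x. G *v x = 0}" using eig \<psi> \<open>l \<noteq> 0\<close> by auto
    moreover have "\<psi> \<in> {x. (G - l *\<^sub>R proj \<psi>) *v x = 0}"
      by (simp add: matrix_vector_mult_diff_rdistrib proj_mult_vec eig c scaleR_matrix_vector_mult)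
    ultimately show ?thesis
      using orth
      by (auto simp: matrix_vector_mult_diff_rdistrib proj_mult_vec scaleR_matrix_vector_mult)
  qed
  moreover have "span {x. M *v x = 0} = {x. M *v x = 0}" for M :: "complex^'n^'n"
    using real_vector.linear_subspace_kernel[OF matrix_vector_mul_linear]
    by (rule span_eq_iff[THEN iffD2])
  ultimately show ?thesis by (metis dim_psubset)
qed

text \<open>Induction on the rank of \<open>G\<close>, peeling off an eigenvector of its largest eigenvalue
  (Hotelling deflation); this is the spectral decomposition of \<open>G\<close> in the only form needed.\<close>

lemma trace_mult_psd_nonneg:
  fixes G A :: "complex^'n^'n"
  assumes "hermitian G" "\<And>x. 0 \<le> x \<bullet> (G *v x)" and pA: "\<And>x. 0 \<le> x \<bullet> (A *v x)"
  shows "0 \<le> Re (trace (G ** A))"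
  using assms(1,2)
proof (induction "DIM(complex^'n) - dim {x. G *v x = 0}" arbitrary: G rule: less_induct)
  case less
  have hG: "hermitian G" and pG: "\<And>x. 0 \<le> x \<bullet> (G *v x)" by fact+
  have "linear (\<lambda>x. - (G *v x))" by (simp add: linear_compose_neg)
  moreover have "x \<bullet> - (G *v y) = - (G *v x) \<bullet> y" for x y
    by (simp add: hermitian_inner_adjoint[OF hG])
  ultimately obtain \<psi> e where \<psi>: "norm \<psi> = 1" and eig: "- (G *v \<psi>) = e *\<^sub>R \<psi>"
    and top: "\<And>x. e * (x \<bullet> x) \<le> x \<bullet> - (G *v x)"
    using symmetric_lowest_eigenvector[of "\<lambda>x. - (G *v x)"] by blast
  define l where "l = - e"
  have eigG: "G *v \<psi> = l *\<^sub>R \<psi>" using arg_cong[OF eig, of uminus] by (simp add: l_def)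
  show ?case
  proof (cases "l \<le> 0")
    case True
    have "G *v x = 0" for x
    proof (rule psd_symmetric_form_zero_imp_zero[OF matrix_vector_mul_linear
          hermitian_inner_adjoint[OF hG] pG])
      have "x \<bullet> (G *v x) \<le> l * (x \<bullet> x)" using top[of x] by (simp add: l_def)
      also have "\<dots> \<le> 0" using True by (simp add: mult_nonpos_nonneg)
      finally show "x \<bullet> (G *v x) = 0" using pG[of x] by simp
    qed
    then have "G = 0" by (simp add: matrix_eq)
    then show ?thesis by (simp add: trace_def)
  next
    case False
    define G' where "G' = G - l *\<^sub>R proj \<psi>"
    have "dim {x. G *v x = 0} < dim {x. G' *v x = 0}"
      unfolding G'_def using False by (intro deflation_kernel_dim_less[OF hG \<psi> eigG]) simp
    moreover have "dim {x. G' *v x = 0} \<le> DIM(complex^'n)" by (rule dim_subset_UNIV)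
    ultimately have "0 \<le> Re (trace (G' ** A))"
      using G'_def hG deflation_psd[OF hG pG \<psi> eigG]
      by (intro less.hyps) (auto intro: hermitian_diff hermitian_scaleR hermitian_proj)
    moreover have "trace (G ** A) = trace (G' ** A) + l *\<^sub>R cinner \<psi> (A *v \<psi>)"
      using linear_add[OF linear_trace_mult_left, of G' "l *\<^sub>R proj \<psi>" A]
        linear_scale[OF linear_trace_mult_left, of l "proj \<psi>" A]
      by (simp add: G'_def trace_proj_mult)
    ultimately show ?thesis using pA[of \<psi>] False by simp
  qed
qed

lemma density_op_trace_ge:
  fixes G H :: "complex^'n^'n"
  assumes G: "G \<in> density_ops" and lower: "\<And>x. e * (x \<bullet> x) \<le> x \<bullet> (H *v x)"
  shows "e \<le> Re (trace (G ** H))"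
proof -
  have hG: "hermitian G" and pG: "\<And>x. 0 \<le> x \<bullet> (G *v x)" and tG: "trace G = 1"
    using G by (auto simp: density_ops_def)
  have "0 \<le> Re (trace (G ** (H - e *\<^sub>R mat 1)))"
    using lower by (intro trace_mult_psd_nonneg[OF hG pG])
      (simp add: matrix_vector_mult_diff_rdistrib scaleR_matrix_vector_mult inner_diff_right)
  also have "trace (G ** (H - e *\<^sub>R mat 1)) = trace (G ** H) - e *\<^sub>R trace G"
    by (simp add: linear_diff[OF linear_trace_mult_right] linear_scale[OF linear_trace_mult_right])
  finally show ?thesis using tG by simp
qed

lemma ground_statesE:
  assumes "\<Gamma> \<in> ground_states H"
  obtains \<psi> e where "\<Gamma> = proj \<psi>" "norm \<psi> = 1" "H *v \<psi> = e *\<^sub>R \<psi>"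
    "\<And>\<mu> \<phi>. \<phi> \<noteq> 0 \<Longrightarrow> H *v \<phi> = \<mu> *\<^sub>R \<phi> \<Longrightarrow> e \<le> \<mu>"
  using assms by (auto simp: ground_states_def cinner_self_eq_1_iff scalar_mult_of_real)

lemma trace_proj_eigenvector:
  assumes "norm \<psi> = 1" "H *v \<psi> = e *\<^sub>R \<psi>"
  shows "Re (trace (proj \<psi> ** H)) = e"
  using assms by (simp add: trace_proj_mult flip: power2_norm_eq_inner)

lemma ground_states_nonempty:
  assumes "hermitian H"
  shows "ground_states H \<noteq> {}"
proof -
  obtain \<psi> e where \<psi>: "norm \<psi> = 1" and eig: "H *v \<psi> = e *\<^sub>R \<psi>"
    and lower: "\<And>x. e * (x \<bullet> x) \<le> x \<bullet> (H *v x)"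
    using hermitian_lowest_eigenvector[OF assms] by blast
  have "e \<le> \<mu>" if "\<phi> \<noteq> 0" "H *v \<phi> = \<mu> *\<^sub>R \<phi>" for \<mu> \<phi>
    using lower[of \<phi>] that by simp
  then have "proj \<psi> \<in> ground_states H"
    using \<psi> eig by (auto simp: ground_states_def cinner_self_eq_1_iff scalar_mult_of_real)
  then show ?thesis by blast
qed

lemma ground_state_variational:
  assumes "hermitian H" and "\<Gamma>\<^sub>0 \<in> ground_states H" and "\<Gamma> \<in> density_ops"
  shows "Re (trace (\<Gamma>\<^sub>0 ** H)) \<le> Re (trace (\<Gamma> ** H))"
proof -
  obtain \<psi>\<^sub>0 e\<^sub>0 where \<Gamma>\<^sub>0: "\<Gamma>\<^sub>0 = proj \<psi>\<^sub>0" "norm \<psi>\<^sub>0 = 1" "H *v \<psi>\<^sub>0 = e\<^sub>0 *\<^sub>R \<psi>\<^sub>0"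
    and lowest: "\<And>\<mu> \<phi>. \<phi> \<noteq> 0 \<Longrightarrow> H *v \<phi> = \<mu> *\<^sub>R \<phi> \<Longrightarrow> e\<^sub>0 \<le> \<mu>"
    using ground_statesE[OF assms(2)] by blast
  obtain \<psi> e where eig: "norm \<psi> = 1" "H *v \<psi> = e *\<^sub>R \<psi>"
    and lower: "\<And>x. e * (x \<bullet> x) \<le> x \<bullet> (H *v x)"
    using hermitian_lowest_eigenvector[OF assms(1)] by blast
  have "Re (trace (\<Gamma>\<^sub>0 ** H)) = e\<^sub>0" using \<Gamma>\<^sub>0 by (simp add: trace_proj_eigenvector)
  also have "e\<^sub>0 \<le> e" using eig by (intro lowest) auto
  also have "e \<le> Re (trace (\<Gamma> ** H))" using assms(3) lower by (rule density_op_trace_ge)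
  finally show ?thesis .
qed

section \<open>Density operators form a compact convex set\<close>

lemma ground_states_subset_pure_states: "ground_states H \<subseteq> pure_states"
  unfolding ground_states_def pure_states_def by blast

lemma pure_states_subset_density_ops: "pure_states \<subseteq> density_ops"
proof
  fix \<Gamma> :: "complex^'n^'n"
  assume "\<Gamma> \<in> pure_states"
  then obtain \<psi> where \<Gamma>: "\<Gamma> = proj \<psi>" and c: "cinner \<psi> \<psi> = 1"
    unfolding pure_states_def by blast
  have "x \<bullet> (proj \<psi> *v x) = Re (cinner \<psi> x * cnj (cinner \<psi> x))" for x
    by (simp only: Re_cinner[symmetric] proj_mult_vec cinner_scalar_right cinner_commute[of x \<psi>])
  then have "0 \<le> x \<bullet> (proj \<psi> *v x)" for x by simp
  moreover have "trace (proj \<psi>) = 1"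
    using trace_proj_mult[of \<psi> "mat 1"] c by simp
  ultimately show "\<Gamma> \<in> density_ops"
    unfolding density_ops_def \<Gamma> by (simp add: hermitian_proj)
qed

lemma density_op_entry_bound:
  assumes "\<Gamma> \<in> density_ops" and "norm u = 1"
  shows "\<bar>\<Gamma>$i$j \<bullet> u\<bar> \<le> 1"
proof -
  have hG: "hermitian \<Gamma>" and pG: "\<And>x. 0 \<le> x \<bullet> (\<Gamma> *v x)" and tG: "trace \<Gamma> = 1"
    using assms(1) by (auto simp: density_ops_def)
  have form: "axis k v \<bullet> (\<Gamma> *v axis l w) = v \<bullet> (\<Gamma>$k$l * w)" for k l v w
    by (simp add: inner_axis' matrix_vector_mult_axis)
  have diag_nonneg: "0 \<le> Re (\<Gamma>$k$k)" for k
    using pG[of "axis k 1"] by (simp add: form)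
  have diag_le: "Re (\<Gamma>$k$k) \<le> 1" for k
  proof -
    have "Re (\<Gamma>$k$k) \<le> (\<Sum>l\<in>UNIV. Re (\<Gamma>$l$l))"
      by (rule member_le_sum) (simp_all add: diag_nonneg)
    also have "\<dots> = 1" using arg_cong[OF tG, of Re] by (simp add: trace_def)
    finally show ?thesis .
  qed
  have "2 * \<bar>axis i u \<bullet> (\<Gamma> *v axis j 1)\<bar>
      \<le> axis j 1 \<bullet> (\<Gamma> *v axis j 1) + axis i u \<bullet> (\<Gamma> *v axis i u)"
    by (rule psd_symmetric_form_abs_le[OF matrix_vector_mul_linear hermitian_inner_adjoint[OF hG] pG])
  moreover have "u \<bullet> (\<Gamma>$i$i * u) = ((Re u)\<^sup>2 + (Im u)\<^sup>2) * Re (\<Gamma>$i$i)"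
    by (simp add: inner_complex_def power2_eq_square algebra_simps)
  moreover have "(Re u)\<^sup>2 + (Im u)\<^sup>2 = 1"
    using \<open>norm u = 1\<close> cmod_power2[of u] by simp
  ultimately show ?thesis
    using diag_le[of i] diag_le[of j] by (simp add: form inner_commute)
qed

lemma bounded_density_ops: "bounded (density_ops :: (complex^'n^'n) set)"
  unfolding bounded_iff
proof (intro exI ballI)
  fix \<Gamma> :: "complex^'n^'n"
  assume \<Gamma>: "\<Gamma> \<in> density_ops"
  have "norm \<Gamma> \<le> (\<Sum>b\<in>Basis. \<bar>\<Gamma> \<bullet> b\<bar>)" by (rule norm_le_l1)
  also have "\<dots> \<le> (\<Sum>b\<in>(Basis :: (complex^'n^'n) set). 1)"
    by (rule sum_mono)
      (auto simp: Basis_vec_def inner_axis intro!: density_op_entry_bound[OF \<Gamma>] norm_Basis)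
  finally show "norm \<Gamma> \<le> DIM(complex^'n^'n)" by simp
qed

lemma closed_density_ops: "closed (density_ops :: (complex^'n^'n) set)"
proof -
  have eq: "density_ops = {\<Gamma>::complex^'n^'n. \<forall>i j. \<Gamma>$i$j = cnj (\<Gamma>$j$i)} \<inter>
      (\<Inter>x. {\<Gamma>. 0 \<le> Re (cinner x (\<Gamma> *v x))}) \<inter> {\<Gamma>. trace \<Gamma> = 1}"
    unfolding density_ops_def hermitian_def by blast
  have herm: "closed {\<Gamma>::complex^'n^'n. \<forall>i j. \<Gamma>$i$j = cnj (\<Gamma>$j$i)}"
    by (intro closed_Collect_all closed_Collect_eq continuous_intros)
  have psd: "closed {\<Gamma>::complex^'n^'n. 0 \<le> Re (cinner x (\<Gamma> *v x))}" for x
    unfolding cinner_def matrix_vector_mult_def by (intro closed_Collect_le continuous_intros)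
  have tr: "closed {\<Gamma>::complex^'n^'n. trace \<Gamma> = 1}"
    unfolding trace_def by (intro closed_Collect_eq continuous_intros)
  show ?thesis unfolding eq by (intro closed_Int closed_INT ballI herm psd tr)
qed

lemma compact_density_ops: "compact (density_ops :: (complex^'n^'n) set)"
  by (simp add: compact_eq_bounded_closed bounded_density_ops closed_density_ops)

lemma convex_density_ops: "convex (density_ops :: (complex^'n^'n) set)"
  unfolding convex_def
proof (intro ballI allI impI)
  fix A B :: "complex^'n^'n" and s t :: real
  assume "A \<in> density_ops" "B \<in> density_ops" "0 \<le> s" "0 \<le> t" "s + t = 1"
  then show "s *\<^sub>R A + t *\<^sub>R B \<in> density_ops"
    by (auto simp: density_ops_def hermitian_add hermitian_scaleR trace_add trace_scaleR
        matrix_vector_mult_add_rdistrib scaleR_matrix_vector_mult inner_add_right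
        simp flip: scaleR_add_left)
qed

section \<open>Conjugates of marginal functions\<close>

lemma fenchel_young: "linear \<rho> \<Longrightarrow> ereal (\<rho> v) - g \<rho> \<le> conj_fn g v"
  unfolding conj_fn_def by (rule SUP_upper) simp

lemma biconj_le:
  assumes "linear \<rho>"
  shows "biconj g \<rho> \<le> g \<rho>"
  unfolding biconj_def
proof (rule SUP_least)
  fix v
  have "ereal (\<rho> v) - g \<rho> \<le> conj_fn g v" using assms by (rule fenchel_young)
  then show "ereal (\<rho> v) - conj_fn g v \<le> g \<rho>"
    by (cases "g \<rho>"; cases "conj_fn g v") auto
qed

lemma conj_fn_antimono:
  assumes "\<And>\<rho>. linear \<rho> \<Longrightarrow> g \<rho> \<le> h \<rho>"
  shows "conj_fn h v \<le> conj_fn g v"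
  unfolding conj_fn_def by (rule SUP_subset_mono) (auto intro: ereal_minus_mono assms)

lemma biconj_antimono:
  assumes "\<And>v. conj_fn g v \<le> conj_fn h v"
  shows "biconj h \<rho> \<le> biconj g \<rho>"
  unfolding biconj_def by (intro SUP_mono') (simp add: assms ereal_minus_mono)

lemma linear_functional_inner_repr:
  fixes f :: "'v::euclidean_space \<Rightarrow> real"
  assumes "linear f"
  shows "f v = (\<Sum>b\<in>Basis. f b *\<^sub>R b) \<bullet> v"
proof -
  have "f v = f (\<Sum>b\<in>Basis. (v \<bullet> b) *\<^sub>R b)" by (simp add: euclidean_representation)
  also have "\<dots> = (\<Sum>b\<in>Basis. f b *\<^sub>R b) \<bullet> v"
    by (simp add: linear_sum[OF assms] linear_scale[OF assms] inner_sum_left inner_commute[of v]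
        mult.commute)
  finally show ?thesis .
qed

text \<open>The set \<open>(R, E) ` K\<close> plus the upward ray is closed and convex and avoids \<open>(r, c)\<close>, so the
  two are strictly separated; a vertical separating hyperplane is tilted using a lower bound
  of \<open>E\<close> on \<open>K\<close>.\<close>

lemma affine_minorant_separation:
  fixes K :: "'a::euclidean_space set" and R :: "'a \<Rightarrow> 'b::euclidean_space" and E :: "'a \<Rightarrow> real"
  assumes K: "compact K" "convex K" and R: "linear R" and E: "linear E"
    and above: "\<And>x. x \<in> K \<Longrightarrow> R x = r \<Longrightarrow> c < E x"
  obtains w where "\<And>x. x \<in> K \<Longrightarrow> R x \<bullet> w - E x \<le> r \<bullet> w - c"
proof (cases "K = {}")
  case False
  then obtain x\<^sub>0 where "x\<^sub>0 \<in> K" by blast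
  define S where "S = (\<Union>p\<in>{0::'b} \<times> {0::real..}. \<Union>q\<in>(\<lambda>x. (R x, E x)) ` K. {p + q})"
  have L: "bounded_linear (\<lambda>x. (R x, E x))"
    using R E by (intro bounded_linear_Pair) (simp_all flip: linear_conv_bounded_linear)
  have closed_S: "closed S" unfolding S_def
    using L K
    by (intro closed_compact_sums closed_Times compact_continuous_image linear_continuous_on) auto
  have convex_S: "convex S" unfolding S_def
    using L K by (intro convex_sums convex_Times convex_linear_image bounded_linear.linear) auto
  have notin_S: "(r, c) \<notin> S"
  proof
    assume "(r, c) \<in> S"
    then obtain s x where "s \<ge> 0" "x \<in> K" "(r, c) = (0, s) + (R x, E x)"
      unfolding S_def by auto
    then show False using above[of x] by auto
  qed
  obtain a \<beta> where a_r: "a \<bullet> (r, c) < \<beta>" and a_S: "\<forall>p\<in>S. \<beta> < a \<bullet> p"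
    using separating_hyperplane_closed_point[OF convex_S closed_S notin_S] by blast
  obtain w \<alpha> where a: "a = (w, \<alpha>)" by (cases a)
  have sep: "\<beta> < w \<bullet> R x + \<alpha> * E x + \<alpha> * s" if "x \<in> K" "s \<ge> 0" for x s
  proof -
    have "(R x, E x + s) \<in> S"
      unfolding S_def using that by (intro UN_I[of "(0, s)"] UN_I[of "(R x, E x)"]) auto
    with a_S have "\<beta> < a \<bullet> (R x, E x + s)" by blast
    then show ?thesis by (simp add: a algebra_simps)
  qed
  have sep_r: "w \<bullet> r + \<alpha> * c < \<beta>" using a_r by (simp add: a)
  have "0 \<le> \<alpha>"
  proof (rule ccontr)
    assume "\<not> 0 \<le> \<alpha>"
    define s where "s = (\<bar>w \<bullet> R x\<^sub>0 + \<alpha> * E x\<^sub>0\<bar> + \<bar>\<beta>\<bar>) / (- \<alpha>)"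
    have "s \<ge> 0" unfolding s_def using \<open>\<not> 0 \<le> \<alpha>\<close> by (intro divide_nonneg_pos) auto
    moreover have "\<alpha> * s = - (\<bar>w \<bullet> R x\<^sub>0 + \<alpha> * E x\<^sub>0\<bar> + \<bar>\<beta>\<bar>)"
      using \<open>\<not> 0 \<le> \<alpha>\<close> by (simp add: s_def)
    ultimately show False
      using sep[OF \<open>x\<^sub>0 \<in> K\<close>, of s] abs_ge_self[of "w \<bullet> R x\<^sub>0 + \<alpha> * E x\<^sub>0"] abs_ge_self[of \<beta>]
      by linarith
  qed
  show thesis
  proof (cases "\<alpha> = 0")
    case True
    have "continuous_on K E" using E by (simp add: linear_continuous_on linear_conv_bounded_linear)
    then obtain x\<^sub>m where "x\<^sub>m \<in> K" and min: "\<forall>x\<in>K. E x\<^sub>m \<le> E x"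
      using continuous_attains_inf[OF K(1) False] by blast
    define d where "d = \<beta> - w \<bullet> r"
    have "d > 0" using sep_r True by (simp add: d_def)
    define t where "t = max 0 ((c - E x\<^sub>m) / d)"
    have "t \<ge> 0" by (simp add: t_def)
    have "(c - E x\<^sub>m) / d * d \<le> t * d"
      using \<open>d > 0\<close> by (intro mult_right_mono) (simp_all add: t_def)
    then have "c - E x\<^sub>m \<le> t * d" using \<open>d > 0\<close> by simp
    show thesis
    proof (rule that[of "- t *\<^sub>R w"])
      fix x assume "x \<in> K"
      have "t * d \<le> t * (w \<bullet> R x - w \<bullet> r)"
        using sep[OF \<open>x \<in> K\<close> order_refl] True \<open>t \<ge> 0\<close>
        by (intro mult_left_mono) (simp_all add: d_def)
      then show "R x \<bullet> (- t *\<^sub>R w) - E x \<le> r \<bullet> (- t *\<^sub>R w) - c"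
        using min[rule_format, OF \<open>x \<in> K\<close>] \<open>c - E x\<^sub>m \<le> t * d\<close>
        by (simp add: inner_commute right_diff_distrib)
    qed
  next
    case False
    with \<open>0 \<le> \<alpha>\<close> have "\<alpha> > 0" by simp
    show thesis
    proof (rule that[of "- (1 / \<alpha>) *\<^sub>R w"])
      fix x assume "x \<in> K"
      have "(w \<bullet> r + \<alpha> * c) / \<alpha> < (w \<bullet> R x + \<alpha> * E x) / \<alpha>"
        using sep[OF \<open>x \<in> K\<close> order_refl] sep_r \<open>\<alpha> > 0\<close>
        by (intro divide_strict_right_mono) simp_all
      then show "R x \<bullet> (- (1 / \<alpha>) *\<^sub>R w) - E x \<le> r \<bullet> (- (1 / \<alpha>) *\<^sub>R w) - c"
        using \<open>\<alpha> > 0\<close> by (simp add: inner_commute add_divide_distrib)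
    qed
  qed
qed (use that in blast)

text \<open>\<open>marginal K R E\<close> is the image of the function \<open>E\<close> on \<open>K\<close> under \<open>R\<close>, with value
  \<open>\<infinity>\<close> outside \<open>R ` K\<close>; \<open>F_e\<close> is the instance \<open>K = density_ops\<close>, \<open>R = iota_star \<iota>\<close>,
  \<open>E = energy W\<close>.\<close>

definition marginal ::
    "'a set \<Rightarrow> ('a \<Rightarrow> 'v \<Rightarrow> real) \<Rightarrow> ('a \<Rightarrow> real) \<Rightarrow> ('v \<Rightarrow> real) \<Rightarrow> ereal" where
  "marginal K R E \<rho> = (INF x\<in>{x\<in>K. R x = \<rho>}. ereal (E x))"

lemma conj_fn_marginal_le:
  assumes "\<And>x. x \<in> K \<Longrightarrow> R x v - E x \<le> m"
  shows "conj_fn (marginal K R E) v \<le> ereal m"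
  unfolding conj_fn_def
proof (rule SUP_least)
  fix \<rho>
  have "ereal (\<rho> v - m) \<le> marginal K R E \<rho>"
    unfolding marginal_def using assms by (intro INF_greatest) fastforce
  then show "ereal (\<rho> v) - marginal K R E \<rho> \<le> ereal m"
    by (cases "marginal K R E \<rho>") auto
qed

lemma biconj_marginal:
  fixes K :: "'a::euclidean_space set" and R :: "'a \<Rightarrow> 'v::euclidean_space \<Rightarrow> real"
  assumes K: "compact K" "convex K" and E: "linear E"
    and R: "\<And>x. linear (R x)" "\<And>v. linear (\<lambda>x. R x v)" and \<rho>: "linear \<rho>"
  shows "biconj (marginal K R E) \<rho> = marginal K R E \<rho>"
proof (rule antisym[OF biconj_le[OF \<rho>]], rule ccontr)
  assume "\<not> marginal K R E \<rho> \<le> biconj (marginal K R E) \<rho>"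
  then have "biconj (marginal K R E) \<rho> < marginal K R E \<rho>" by simp
  then obtain c where c_biconj: "biconj (marginal K R E) \<rho> < ereal c"
    and c_marginal: "ereal c < marginal K R E \<rho>"
    using ereal_dense2 by blast
  define vec :: "('v \<Rightarrow> real) \<Rightarrow> 'v" where "vec f = (\<Sum>b\<in>Basis. f b *\<^sub>R b)" for f
  have repr: "f v = vec f \<bullet> v" if "linear f" for f v
    unfolding vec_def using that by (rule linear_functional_inner_repr)
  have "linear (\<lambda>x. vec (R x))"
    by (rule linearI) (simp_all add: vec_def linear_add[OF R(2)] linear_scale[OF R(2)]
        scaleR_add_left sum.distrib scaleR_sum_right)
  moreover have "c < E x" if "x \<in> K" "vec (R x) = vec \<rho>" for x
  proof -
    have "R x = \<rho>" using that(2) by (simp add: fun_eq_iff repr[OF R(1)] repr[OF \<rho>])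
    then have "marginal K R E \<rho> \<le> ereal (E x)"
      unfolding marginal_def using that(1) by (intro INF_lower) auto
    from less_le_trans[OF c_marginal this] show ?thesis by simp
  qed
  ultimately obtain w where w: "\<And>x. x \<in> K \<Longrightarrow> vec (R x) \<bullet> w - E x \<le> vec \<rho> \<bullet> w - c"
    using affine_minorant_separation[OF K _ E] by blast
  have "conj_fn (marginal K R E) w \<le> ereal (\<rho> w - c)"
    using w by (intro conj_fn_marginal_le) (simp add: repr[OF R(1)] repr[OF \<rho>])
  then have "ereal c \<le> ereal (\<rho> w) - conj_fn (marginal K R E) w"
    by (cases "conj_fn (marginal K R E) w") auto
  also have "\<dots> \<le> biconj (marginal K R E) \<rho>"
    unfolding biconj_def by (rule SUP_upper) simp
  finally show False using c_biconj by simp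
qed

lemma linear_Re_trace_mult_left: "linear (\<lambda>\<Gamma>. Re (trace (\<Gamma> ** (M::complex^'n^'n))))"
  using linear_compose[OF linear_trace_mult_left bounded_linear_Re[THEN bounded_linear.linear]]
  by (simp add: o_def)

lemma linear_iota_star:
  assumes "linear \<iota>"
  shows "linear (iota_star \<iota> \<Gamma>)"
  using linear_compose[OF linear_compose[OF assms linear_trace_mult_right]
      bounded_linear_Re[THEN bounded_linear.linear]]
  by (simp add: iota_star_def o_def)

lemma Re_trace_hamiltonian: "Re (trace (\<Gamma> ** (\<iota> u + W))) = iota_star \<iota> \<Gamma> u + energy W \<Gamma>"
  by (simp add: iota_star_def energy_def matrix_add_ldistrib trace_add)

lemma F_e_eq_marginal: "F_e \<iota> W = marginal density_ops (iota_star \<iota>) (energy W)"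
  by (simp add: fun_eq_iff F_e_def marginal_def)

lemma biconj_F_e:
  assumes "gen_functional_theory \<iota> W" and "linear \<rho>"
  shows "biconj (F_e \<iota> W) \<rho> = F_e \<iota> W \<rho>"
  unfolding F_e_eq_marginal
proof (rule biconj_marginal[OF compact_density_ops convex_density_ops _ _ _ assms(2)])
  show "linear (energy W)"
    using linear_Re_trace_mult_left by (simp add: energy_def[abs_def])
  show "linear (iota_star \<iota> \<Gamma>)" for \<Gamma>
    using assms(1) by (intro linear_iota_star) (simp add: gen_functional_theory_def)
  show "linear (\<lambda>\<Gamma>. iota_star \<iota> \<Gamma> v)" for v
    using linear_Re_trace_mult_left by (simp add: iota_star_def)
qed

lemma F_e_le_F_p: "F_e \<iota> W \<rho> \<le> F_p \<iota> W \<rho>"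
  unfolding F_e_def F_p_def
  using pure_states_subset_density_ops by (intro INF_superset_mono) auto

text \<open>Hohenberg--Kohn: ground states of different potentials with the same density have the
  same energy, which makes \<open>F_HK\<close> independent of the choice made by \<open>SOME\<close>.\<close>

lemma ground_state_energy_le:
  assumes gft: "gen_functional_theory \<iota> W"
    and \<Gamma>\<^sub>1: "\<Gamma>\<^sub>1 \<in> Gp \<iota> W u\<^sub>1" and \<Gamma>\<^sub>2: "\<Gamma>\<^sub>2 \<in> Gp \<iota> W u\<^sub>2"
    and same_density: "iota_star \<iota> \<Gamma>\<^sub>1 = iota_star \<iota> \<Gamma>\<^sub>2"
  shows "energy W \<Gamma>\<^sub>1 \<le> energy W \<Gamma>\<^sub>2"
proof -
  have "hermitian (\<iota> u\<^sub>1 + W)"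
    using gft by (intro hermitian_add) (simp_all add: gen_functional_theory_def)
  moreover have "\<Gamma>\<^sub>2 \<in> density_ops"
    using \<Gamma>\<^sub>2 ground_states_subset_pure_states pure_states_subset_density_ops by (auto simp: Gp_def)
  ultimately have "Re (trace (\<Gamma>\<^sub>1 ** (\<iota> u\<^sub>1 + W))) \<le> Re (trace (\<Gamma>\<^sub>2 ** (\<iota> u\<^sub>1 + W)))"
    using \<Gamma>\<^sub>1 unfolding Gp_def by (intro ground_state_variational)
  then show ?thesis by (simp add: Re_trace_hamiltonian same_density)
qed

lemma F_HK_ground_state:
  assumes gft: "gen_functional_theory \<iota> W" and \<Gamma>: "\<Gamma> \<in> Gp \<iota> W v"
  shows "F_HK \<iota> W (iota_star \<iota> \<Gamma>) = ereal (energy W \<Gamma>)"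
proof -
  define p where "p = (SOME (u, \<Gamma>'). \<Gamma>' \<in> Gp \<iota> W u \<and> iota_star \<iota> \<Gamma>' = iota_star \<iota> \<Gamma>)"
  obtain u \<Gamma>' where p_eq: "p = (u, \<Gamma>')" by (cases p)
  have "(\<lambda>(u, \<Gamma>'). \<Gamma>' \<in> Gp \<iota> W u \<and> iota_star \<iota> \<Gamma>' = iota_star \<iota> \<Gamma>) p"
    unfolding p_def by (rule someI[of _ "(v, \<Gamma>)"]) (simp add: \<Gamma>)
  then have \<Gamma>': "\<Gamma>' \<in> Gp \<iota> W u" and same_density: "iota_star \<iota> \<Gamma>' = iota_star \<iota> \<Gamma>"
    by (simp_all add: p_eq)
  have "energy W \<Gamma>' = energy W \<Gamma>"
    using ground_state_energy_le[OF gft \<Gamma>' \<Gamma> same_density]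
      ground_state_energy_le[OF gft \<Gamma> \<Gamma>' same_density[symmetric]]
    by simp
  moreover have "\<exists>u \<Gamma>'. \<Gamma>' \<in> Gp \<iota> W u \<and> iota_star \<iota> \<Gamma>' = iota_star \<iota> \<Gamma>"
    using \<Gamma> by blast
  ultimately show ?thesis by (simp add: F_HK_def p_eq flip: p_def)
qed

lemma F_p_le_F_HK:
  assumes "gen_functional_theory \<iota> W"
  shows "F_p \<iota> W \<rho> \<le> F_HK \<iota> W \<rho>"
proof (cases "\<exists>v \<Gamma>. \<Gamma> \<in> Gp \<iota> W v \<and> iota_star \<iota> \<Gamma> = \<rho>")
  case True
  then obtain v \<Gamma> where \<Gamma>: "\<Gamma> \<in> Gp \<iota> W v" and \<rho>: "\<rho> = iota_star \<iota> \<Gamma>" by blast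
  have "\<Gamma> \<in> pure_states" using \<Gamma> ground_states_subset_pure_states by (auto simp: Gp_def)
  then have "F_p \<iota> W \<rho> \<le> ereal (energy W \<Gamma>)"
    unfolding F_p_def \<rho> by (intro INF_lower) auto
  then show ?thesis by (simp add: \<rho> F_HK_ground_state[OF assms \<Gamma>])
next
  case False
  then show ?thesis unfolding F_HK_def by (subst if_not_P) simp_all
qed

text \<open>Both conjugates at \<open>v\<close> equal minus the ground-state energy of \<open>\<iota> (- v) + W\<close>; the
  supremum defining the conjugate of \<open>F_e\<close> is attained at the density of a ground state,
  which lies in the domain of \<open>F_HK\<close>.\<close>

lemma conj_F_e_le_conj_F_HK:
  assumes gft: "gen_functional_theory \<iota> W"
  shows "conj_fn (F_e \<iota> W) v \<le> conj_fn (F_HK \<iota> W) v"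
proof -
  have lin: "linear \<iota>" and herm: "hermitian (\<iota> (- v) + W)"
    using gft by (auto simp: gen_functional_theory_def intro: hermitian_add)
  obtain \<Gamma>\<^sub>0 where \<Gamma>\<^sub>0: "\<Gamma>\<^sub>0 \<in> Gp \<iota> W (- v)"
    using ground_states_nonempty[OF herm] by (auto simp: Gp_def)
  then have ground: "\<Gamma>\<^sub>0 \<in> ground_states (\<iota> (- v) + W)" by (simp add: Gp_def)
  have neg: "iota_star \<iota> \<Gamma> (- v) = - iota_star \<iota> \<Gamma> v" for \<Gamma>
    by (rule linear_neg[OF linear_iota_star[OF lin]])
  have "iota_star \<iota> \<Gamma> v - energy W \<Gamma> \<le> iota_star \<iota> \<Gamma>\<^sub>0 v - energy W \<Gamma>\<^sub>0"
    if "\<Gamma> \<in> density_ops" for \<Gamma>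
    using ground_state_variational[OF herm ground that] by (simp add: Re_trace_hamiltonian neg)
  then have "conj_fn (F_e \<iota> W) v \<le> ereal (iota_star \<iota> \<Gamma>\<^sub>0 v) - ereal (energy W \<Gamma>\<^sub>0)"
    unfolding F_e_eq_marginal by (simp add: conj_fn_marginal_le)
  also have "\<dots> = ereal (iota_star \<iota> \<Gamma>\<^sub>0 v) - F_HK \<iota> W (iota_star \<iota> \<Gamma>\<^sub>0)"
    by (simp add: F_HK_ground_state[OF gft \<Gamma>\<^sub>0])
  also have "\<dots> \<le> conj_fn (F_HK \<iota> W) v"
    using linear_iota_star[OF lin] by (rule fenchel_young)
  finally show ?thesis .
qed

theorem proposition2p34:
  fixes \<iota> :: "'v::euclidean_space \<Rightarrow> complex^'n^'n" and W :: "complex^'n^'n"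
  assumes "gen_functional_theory \<iota> W"
  shows "\<forall>\<rho>. linear \<rho> \<longrightarrow>
           biconj (F_HK \<iota> W) \<rho> = F_e \<iota> W \<rho> \<and> biconj (F_p \<iota> W) \<rho> = F_e \<iota> W \<rho>"
proof (intro allI impI)
  fix \<rho> :: "'v \<Rightarrow> real"
  assume "linear \<rho>"
  then have closed: "biconj (F_e \<iota> W) \<rho> = F_e \<iota> W \<rho>" by (rule biconj_F_e[OF assms])
  have HK_e: "biconj (F_HK \<iota> W) \<rho> \<le> F_e \<iota> W \<rho>"
    unfolding closed[symmetric] by (intro biconj_antimono conj_F_e_le_conj_F_HK[OF assms])
  have e_p: "F_e \<iota> W \<rho> \<le> biconj (F_p \<iota> W) \<rho>"
    unfolding closed[symmetric] by (intro biconj_antimono conj_fn_antimono F_e_le_F_p)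
  have p_HK: "biconj (F_p \<iota> W) \<rho> \<le> biconj (F_HK \<iota> W) \<rho>"
    by (intro biconj_antimono conj_fn_antimono F_p_le_F_HK[OF assms])
  show "biconj (F_HK \<iota> W) \<rho> = F_e \<iota> W \<rho> \<and> biconj (F_p \<iota> W) \<rho> = F_e \<iota> W \<rho>"
    using order.antisym[OF HK_e order.trans[OF e_p p_HK]]
      order.antisym[OF order.trans[OF p_HK HK_e] e_p]
    by simp
qed

end
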